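(* Let $\Delta^{-1},\varepsilon\gg p\gg\mu\gg d^{-1}$. Let $G$ be a graph with minimum degree $\delta(G)\ge\varepsilon d$ that contains no $p$-cut-dense subgraph of order $\mu d$. Then every set $S\subseteq V(G)$ with $|S|\le 10d$ satisfies $|N(S)|\ge 10\Delta|S|$.
   Context: A graph $F$ is $p$-cut-dense if for every partition $V(F)=A\cup B$ into disjoint sets, the number of edges of $F$ between $A$ and $B$ is at least $p|A||B|$. $N(S)$ is the set of vertices adjacent to some vertex of $S$. The hierarchy means: given $\Delta,\varepsilon$, $p$ is sufficiently small; given $p$, $\mu$ is sufficiently small; given $\mu$, $d$ is sufficiently large. *)

theory Defs
  imports Complex_Main
begin

definition graph :: "'a set \<Rightarrow> 'a set set \<Rightarrow> bool" where
  "graph V E \<longleftrightarrow> finite V \<and> (\<forall>e\<in>E. e \<subseteq> V \<and> card e = 2)"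

definition degree :: "'a set set \<Rightarrow> 'a \<Rightarrow> nat" where
  "degree E v = card {u. {u, v} \<in> E}"

definition nbhd :: "'a set set \<Rightarrow> 'a set \<Rightarrow> 'a set" where
  "nbhd E S = {u. \<exists>v\<in>S. {u, v} \<in> E}"

definition subgraph :: "'a set \<Rightarrow> 'a set set \<Rightarrow> 'a set \<Rightarrow> 'a set set \<Rightarrow> bool" where
  "subgraph U F V E \<longleftrightarrow> U \<subseteq> V \<and> F \<subseteq> E \<and> (\<forall>e\<in>F. e \<subseteq> U)"

definition edges_between :: "'a set set \<Rightarrow> 'a set \<Rightarrow> 'a set \<Rightarrow> nat" where
  "edges_between F A B = card {e\<in>F. \<exists>a\<in>A. \<exists>b\<in>B. e = {a, b}}"

definition cut_dense :: "real \<Rightarrow> 'a set \<Rightarrow> 'a set set \<Rightarrow> bool" where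
  "cut_dense p U F \<longleftrightarrow>
     (\<forall>A B. A \<inter> B = {} \<and> A \<union> B = U \<longrightarrow>
        real (edges_between F A B) \<ge> p * real (card A) * real (card B))"

end

theory Submission
  imports Defs
begin

text \<open>Suppose \<open>|N(S)| < 10\<Delta>|S|\<close> and put \<open>W = S \<union> N(S)\<close> and \<open>K = 1 + 10\<Delta>\<close>. Then \<open>|W| \<le> K|S|\<close>,
  while the degrees of \<open>S\<close> give at least \<open>\<epsilon>d|S|\<close> ordered adjacent pairs inside \<open>W\<close>. With
  \<open>c = \<epsilon>d/(2K)\<close> and \<open>p \<le> \<epsilon>/(20K\<^sup>2)\<close>, the surplus \<open>e(U) - c|U| - p|U|\<^sup>2\<close> (with \<open>e(U)\<close> counting
  ordered adjacent pairs in \<open>U\<close>) is therefore nonnegative on \<open>W\<close>. An inclusion-minimal nonempty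
  \<open>U \<subseteq> W\<close> with nonnegative surplus is \<open>p\<close>-cut-dense: the surplus of \<open>A \<union> B\<close> exceeds the sum of
  the surpluses of \<open>A\<close> and \<open>B\<close> by twice \<open>e(A,B) - p|A||B|\<close>, so a sparse cut would leave \<open>A\<close> or \<open>B\<close>
  with positive surplus. Finally \<open>e(U) \<le> |U|\<^sup>2\<close> forces \<open>|U| \<ge> c \<ge> \<mu>d\<close>.\<close>

definition arcs :: "'a set set \<Rightarrow> 'a set \<Rightarrow> 'a set \<Rightarrow> ('a \<times> 'a) set" where
  "arcs E X Y = {(x, y). x \<in> X \<and> y \<in> Y \<and> {x, y} \<in> E}"

lemma arcs_subset_Times: "arcs E X Y \<subseteq> X \<times> Y"
  unfolding arcs_def by auto

lemma finite_arcs: "finite X \<Longrightarrow> finite Y \<Longrightarrow> finite (arcs E X Y)"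
  by (metis arcs_subset_Times finite_cartesian_product finite_subset)

lemma card_arcs_le: "finite X \<Longrightarrow> finite Y \<Longrightarrow> card (arcs E X Y) \<le> card X * card Y"
  by (metis arcs_subset_Times card_cartesian_product card_mono finite_cartesian_product)

lemma card_arcs_mono:
  assumes "finite X'" "finite Y'" "X \<subseteq> X'" "Y \<subseteq> Y'"
  shows "card (arcs E X Y) \<le> card (arcs E X' Y')"
  using assms by (intro card_mono finite_arcs) (auto simp: arcs_def)

lemma card_arcs_commute: "card (arcs E Y X) = card (arcs E X Y)"
proof -
  have "arcs E Y X = prod.swap ` arcs E X Y"
    by (auto simp: arcs_def image_iff insert_commute)
  then show ?thesis
    by (simp add: card_image)
qed

lemma card_arcs_Un_disjoint:
  assumes "finite A" "finite B" "A \<inter> B = {}"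
  shows "card (arcs E (A \<union> B) (A \<union> B)) =
    card (arcs E A A) + card (arcs E B B) + 2 * card (arcs E A B)"
proof -
  have split: "arcs E (A \<union> B) (A \<union> B) = (arcs E A A \<union> arcs E B B) \<union> (arcs E A B \<union> arcs E B A)"
    by (auto simp: arcs_def)
  have "(arcs E A A \<union> arcs E B B) \<inter> (arcs E A B \<union> arcs E B A) = {}"
    "arcs E A A \<inter> arcs E B B = {}" "arcs E A B \<inter> arcs E B A = {}"
    using assms(3) by (auto simp: arcs_def)
  then have "card (arcs E (A \<union> B) (A \<union> B)) =
      (card (arcs E A A) + card (arcs E B B)) + (card (arcs E A B) + card (arcs E B A))"
    unfolding split using assms(1,2) by (simp add: card_Un_disjoint finite_arcs)
  then show ?thesis
    using card_arcs_commute[of E B A] by simp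
qed

lemma card_arcs_le_edges_between:
  assumes "finite A" "finite B" "A \<inter> B = {}"
  shows "card (arcs E A B) \<le> edges_between {e \<in> E. e \<subseteq> A \<union> B} A B"
proof -
  let ?edges = "{e \<in> {e \<in> E. e \<subseteq> A \<union> B}. \<exists>a\<in>A. \<exists>b\<in>B. e = {a, b}}"
  have "inj_on (\<lambda>(x, y). {x, y}) (arcs E A B)"
    using assms(3) by (auto simp: inj_on_def doubleton_eq_iff arcs_def)
  then have "card (arcs E A B) = card ((\<lambda>(x, y). {x, y}) ` arcs E A B)"
    by (simp add: card_image)
  also have "\<dots> \<le> card ?edges"
  proof (rule card_mono)
    have "?edges \<subseteq> Pow (A \<union> B)"
      by blast
    then show "finite ?edges"
      using assms(1,2) by (simp add: finite_subset)
    show "(\<lambda>(x, y). {x, y}) ` arcs E A B \<subseteq> ?edges"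
      by (auto simp: arcs_def)
  qed
  finally show ?thesis
    unfolding edges_between_def .
qed

lemma nbhd_subset_vertices: "graph V E \<Longrightarrow> nbhd E S \<subseteq> V"
  unfolding graph_def nbhd_def by auto

lemma finite_Un_nbhd: "graph V E \<Longrightarrow> S \<subseteq> V \<Longrightarrow> finite (S \<union> nbhd E S)"
  by (meson Un_least finite_subset graph_def nbhd_subset_vertices)

lemma sum_degree_eq_card_arcs:
  assumes "graph V E" "S \<subseteq> V"
  shows "(\<Sum>v\<in>S. degree E v) = card (arcs E S (nbhd E S))"
proof -
  have nbrs_V: "{u. {u, v} \<in> E} \<subseteq> V" for v
    using assms(1) unfolding graph_def by auto
  have "finite V"
    using assms(1) unfolding graph_def by simp
  then have "finite S" "\<forall>v\<in>S. finite {u. {u, v} \<in> E}"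
    using assms(2) nbrs_V by (auto intro: finite_subset)
  moreover have "arcs E S (nbhd E S) = (SIGMA v:S. {u. {u, v} \<in> E})"
    unfolding arcs_def nbhd_def by (auto simp: insert_commute) (metis insert_commute)
  ultimately show ?thesis
    unfolding degree_def by simp
qed

definition surplus :: "'a set set \<Rightarrow> real \<Rightarrow> real \<Rightarrow> 'a set \<Rightarrow> real" where
  "surplus E c p U = real (card (arcs E U U)) - c * real (card U) - p * real (card U) ^ 2"

lemma surplus_Un_disjoint:
  assumes "finite A" "finite B" "A \<inter> B = {}"
  shows "surplus E c p (A \<union> B) = surplus E c p A + surplus E c p B
    + 2 * (real (card (arcs E A B)) - p * real (card A) * real (card B))"
proof -
  have "card (A \<union> B) = card A + card B"
    using assms card_Un_disjoint by blast
  then show ?thesis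
    using card_arcs_Un_disjoint[OF assms, of E]
    by (simp add: surplus_def power2_eq_square algebra_simps)
qed

lemma card_ge_if_surplus_nonneg:
  assumes "finite U" "U \<noteq> {}" "p \<ge> 0" "surplus E c p U \<ge> 0"
  shows "c \<le> real (card U)"
proof -
  have "real (card (arcs E U U)) \<le> real (card U) * real (card U)"
    using card_arcs_le[OF assms(1,1), of E] by (metis of_nat_le_iff of_nat_mult)
  moreover have "p * real (card U) ^ 2 \<ge> 0"
    using assms(3) by simp
  ultimately have "c * real (card U) \<le> real (card U) * real (card U)"
    using assms(4) unfolding surplus_def by linarith
  moreover have "real (card U) > 0"
    using assms(1,2) by (simp add: card_gt_0_iff)
  ultimately show ?thesis
    by simp
qed

lemma cut_dense_if_minimal_surplus_nonneg:
  assumes "finite U" "surplus E c p U \<ge> 0"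
    and minimal: "\<And>U'. U' \<subset> U \<Longrightarrow> U' \<noteq> {} \<Longrightarrow> surplus E c p U' < 0"
  shows "cut_dense p U {e \<in> E. e \<subseteq> U}"
  unfolding cut_dense_def
proof (intro allI impI)
  fix A B
  assume cut: "A \<inter> B = {} \<and> A \<union> B = U"
  then have "finite A" "finite B"
    using assms(1) by auto
  show "p * real (card A) * real (card B) \<le> real (edges_between {e \<in> E. e \<subseteq> U} A B)"
  proof (cases "A = {} \<or> B = {}")
    case True
    then show ?thesis by auto
  next
    case False
    with cut have "A \<subset> U" "B \<subset> U"
      by auto
    then have "surplus E c p A < 0" "surplus E c p B < 0"
      using minimal False by auto
    moreover have "surplus E c p U = surplus E c p A + surplus E c p B
        + 2 * (real (card (arcs E A B)) - p * real (card A) * real (card B))"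
      using surplus_Un_disjoint[OF \<open>finite A\<close> \<open>finite B\<close>] cut by simp
    ultimately have "p * real (card A) * real (card B) \<le> real (card (arcs E A B))"
      using assms(2) by (simp add: algebra_simps)
    also have "\<dots> \<le> real (edges_between {e \<in> E. e \<subseteq> U} A B)"
      using card_arcs_le_edges_between[OF \<open>finite A\<close> \<open>finite B\<close>, of E] cut by simp
    finally show ?thesis .
  qed
qed

lemma exists_cut_dense_subset_surplus_nonneg:
  assumes "finite W" "W \<noteq> {}" "surplus E c p W \<ge> 0"
  shows "\<exists>U \<subseteq> W. U \<noteq> {} \<and> surplus E c p U \<ge> 0 \<and> cut_dense p U {e \<in> E. e \<subseteq> U}"
proof -
  let ?candidates = "{U. U \<subseteq> W \<and> U \<noteq> {} \<and> surplus E c p U \<ge> 0}"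
  have "?candidates \<subseteq> Pow W"
    by blast
  then have "finite ?candidates"
    using assms(1) by (simp add: finite_subset)
  moreover have "W \<in> ?candidates"
    using assms by simp
  ultimately obtain U where U: "U \<in> ?candidates"
    and minimal: "\<forall>U'\<in>?candidates. U' \<le> U \<longrightarrow> U = U'"
    by (meson finite_has_minimal2)
  have "finite U"
    using U assms(1) finite_subset by blast
  moreover have "surplus E c p U' < 0" if "U' \<subset> U" "U' \<noteq> {}" for U'
  proof (rule ccontr)
    assume "\<not> surplus E c p U' < 0"
    then have "U' \<in> ?candidates"
      using that U by auto
    then show False
      using minimal that by blast
  qed
  ultimately have "cut_dense p U {e \<in> E. e \<subseteq> U}"
    using U by (intro cut_dense_if_minimal_surplus_nonneg) auto
  then show ?thesis
    using U by blast
qed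

lemma surplus_nbhd_nonneg:
  fixes \<epsilon> d K p :: real
  assumes G: "graph V E" "\<forall>v\<in>V. \<epsilon> * d \<le> real (degree E v)" and "S \<subseteq> V"
    and small_nbhd: "real (card (S \<union> nbhd E S)) \<le> K * real (card S)"
    and "\<epsilon> * d \<ge> 0" "K > 0" "p \<ge> 0" and p_small: "p * K\<^sup>2 * real (card S) \<le> \<epsilon> * d / 2"
  shows "surplus E (\<epsilon> * d / (2 * K)) p (S \<union> nbhd E S) \<ge> 0"
proof -
  define W where "W = S \<union> nbhd E S"
  define c where "c = \<epsilon> * d / (2 * K)"
  have "finite W"
    using finite_Un_nbhd[OF G(1) \<open>S \<subseteq> V\<close>] unfolding W_def .
  have "\<epsilon> * d * real (card S) \<le> (\<Sum>v\<in>S. real (degree E v))"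
    using G \<open>S \<subseteq> V\<close> sum_mono[of S "\<lambda>_. \<epsilon> * d" "\<lambda>v. real (degree E v)"]
    by (auto simp: subset_iff mult.commute)
  also have "\<dots> = real (card (arcs E S (nbhd E S)))"
    using sum_degree_eq_card_arcs[OF G(1) \<open>S \<subseteq> V\<close>] of_nat_sum by metis
  also have "\<dots> \<le> real (card (arcs E W W))"
    using card_arcs_mono[OF \<open>finite W\<close> \<open>finite W\<close>] unfolding W_def by simp
  finally have arcs_W: "\<epsilon> * d * real (card S) \<le> real (card (arcs E W W))" .
  have "c * real (card W) \<le> c * (K * real (card S))"
    using small_nbhd \<open>\<epsilon> * d \<ge> 0\<close> \<open>K > 0\<close> unfolding c_def W_def by (intro mult_left_mono) auto
  also have "\<dots> = \<epsilon> * d * real (card S) / 2"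
    using \<open>K > 0\<close> unfolding c_def by (simp add: field_simps)
  finally have linear_term: "c * real (card W) \<le> \<epsilon> * d * real (card S) / 2" .
  have "p * real (card W) ^ 2 \<le> p * (K * real (card S)) ^ 2"
    using small_nbhd \<open>p \<ge> 0\<close> unfolding W_def by (intro mult_left_mono power_mono) auto
  also have "\<dots> = (p * K\<^sup>2 * real (card S)) * real (card S)"
    by (simp add: power2_eq_square)
  also have "\<dots> \<le> (\<epsilon> * d / 2) * real (card S)"
    using p_small by (intro mult_right_mono) auto
  also have "\<dots> = \<epsilon> * d * real (card S) / 2"
    by simp
  finally show ?thesis
    using arcs_W linear_term unfolding surplus_def W_def c_def by linarith
qed

lemma cut_dense_subgraph_if_small_nbhd:
  fixes \<epsilon> d K p :: real
  assumes G: "graph V E" "\<forall>v\<in>V. \<epsilon> * d \<le> real (degree E v)" and "S \<subseteq> V" "S \<noteq> {}"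
    and "real (card (S \<union> nbhd E S)) \<le> K * real (card S)"
    and "\<epsilon> * d \<ge> 0" "K > 0" "p \<ge> 0" "p * K\<^sup>2 * real (card S) \<le> \<epsilon> * d / 2"
  shows "\<exists>U. subgraph U {e \<in> E. e \<subseteq> U} V E \<and> \<epsilon> * d / (2 * K) \<le> real (card U)
    \<and> cut_dense p U {e \<in> E. e \<subseteq> U}"
proof -
  define W where "W = S \<union> nbhd E S"
  have "W \<subseteq> V" "finite W"
    using nbhd_subset_vertices[OF G(1)] finite_Un_nbhd[OF G(1)] \<open>S \<subseteq> V\<close> unfolding W_def by auto
  moreover have "W \<noteq> {}"
    using \<open>S \<noteq> {}\<close> unfolding W_def by simp
  moreover have "surplus E (\<epsilon> * d / (2 * K)) p W \<ge> 0"
    unfolding W_def using assms by (intro surplus_nbhd_nonneg) auto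
  ultimately obtain U where U: "U \<subseteq> W" "U \<noteq> {}" "surplus E (\<epsilon> * d / (2 * K)) p U \<ge> 0"
      and cut_dense_U: "cut_dense p U {e \<in> E. e \<subseteq> U}"
    using exists_cut_dense_subset_surplus_nonneg[of W E "\<epsilon> * d / (2 * K)" p] by blast
  have "finite U"
    using \<open>finite W\<close> \<open>U \<subseteq> W\<close> by (rule finite_subset[rotated])
  then have "\<epsilon> * d / (2 * K) \<le> real (card U)"
    using U \<open>p \<ge> 0\<close> by (intro card_ge_if_surplus_nonneg)
  moreover have "subgraph U {e \<in> E. e \<subseteq> U} V E"
    using \<open>U \<subseteq> W\<close> \<open>W \<subseteq> V\<close> unfolding subgraph_def by auto
  ultimately show ?thesis
    using cut_dense_U by blast
qed

lemma card_nbhd_ge_if_no_cut_dense_subgraph: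
  fixes \<Delta> \<epsilon> p \<mu> d :: real
  assumes "\<Delta> \<ge> 0" "\<epsilon> \<ge> 0" "d \<ge> 0" "p \<ge> 0"
    and p_small: "p \<le> \<epsilon> / (20 * (1 + 10 * \<Delta>)\<^sup>2)" and \<mu>_small: "\<mu> \<le> \<epsilon> / (2 * (1 + 10 * \<Delta>))"
    and G: "graph V E" "\<forall>v\<in>V. \<epsilon> * d \<le> real (degree E v)"
    and no_cut_dense: "\<nexists>U F. subgraph U F V E \<and> \<mu> * d \<le> real (card U) \<and> cut_dense p U F"
    and "S \<subseteq> V" and S_small: "real (card S) \<le> 10 * d"
  shows "10 * \<Delta> * real (card S) \<le> real (card (nbhd E S))"
proof (rule ccontr)
  define K where "K = 1 + 10 * \<Delta>"
  have "K > 0"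
    using \<open>\<Delta> \<ge> 0\<close> unfolding K_def by simp
  assume "\<not> ?thesis"
  then have "S \<noteq> {}" and "real (card (S \<union> nbhd E S)) \<le> K * real (card S)"
    using card_Un_le[of S "nbhd E S"] unfolding K_def by (auto simp: algebra_simps)
  moreover have "p * K\<^sup>2 * real (card S) \<le> \<epsilon> / 20 * (10 * d)"
    using p_small S_small \<open>p \<ge> 0\<close> \<open>\<epsilon> \<ge> 0\<close> \<open>K > 0\<close> unfolding K_def[symmetric]
    by (intro mult_mono) (auto simp: field_simps)
  ultimately obtain U where "subgraph U {e \<in> E. e \<subseteq> U} V E"
      "\<epsilon> * d / (2 * K) \<le> real (card U)" "cut_dense p U {e \<in> E. e \<subseteq> U}"
    using cut_dense_subgraph_if_small_nbhd[OF G \<open>S \<subseteq> V\<close>] \<open>\<epsilon> \<ge> 0\<close> \<open>d \<ge> 0\<close> \<open>p \<ge> 0\<close> \<open>K > 0\<close>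
    by auto
  moreover have "\<mu> * d \<le> \<epsilon> * d / (2 * K)"
    using mult_right_mono[OF \<mu>_small \<open>d \<ge> 0\<close>] unfolding K_def by simp
  ultimately show False
    using no_cut_dense by fastforce
qed

theorem lemma3p15:
  shows "\<forall>(\<Delta>::real) > 0. \<forall>(\<epsilon>::real) > 0. \<exists>p0::real > 0. \<forall>p. 0 < p \<and> p \<le> p0 \<longrightarrow>
    (\<exists>\<mu>0::real > 0. \<forall>\<mu>. 0 < \<mu> \<and> \<mu> \<le> \<mu>0 \<longrightarrow>
      (\<exists>d0::real. \<forall>d \<ge> d0. \<forall>(V::'a set) (E::'a set set).
         graph V E \<and> (\<forall>v\<in>V. real (degree E v) \<ge> \<epsilon> * d) \<and>
         \<not> (\<exists>U F. subgraph U F V E \<and> real (card U) \<ge> \<mu> * d \<and> cut_dense p U F)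
         \<longrightarrow> (\<forall>S \<subseteq> V. real (card S) \<le> 10 * d \<longrightarrow>
                real (card (nbhd E S)) \<ge> 10 * \<Delta> * real (card S))))"
proof (intro allI impI)
  fix \<Delta> \<epsilon> :: real
  assume "\<Delta> > 0" "\<epsilon> > 0"
  then have p0: "\<epsilon> / (20 * (1 + 10 * \<Delta>)\<^sup>2) > 0" and \<mu>0: "\<epsilon> / (2 * (1 + 10 * \<Delta>)) > 0"
    by auto
  show "\<exists>p0::real > 0. \<forall>p. 0 < p \<and> p \<le> p0 \<longrightarrow>
    (\<exists>\<mu>0::real > 0. \<forall>\<mu>. 0 < \<mu> \<and> \<mu> \<le> \<mu>0 \<longrightarrow>
      (\<exists>d0::real. \<forall>d \<ge> d0. \<forall>(V::'a set) (E::'a set set).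
         graph V E \<and> (\<forall>v\<in>V. real (degree E v) \<ge> \<epsilon> * d) \<and>
         \<not> (\<exists>U F. subgraph U F V E \<and> real (card U) \<ge> \<mu> * d \<and> cut_dense p U F)
         \<longrightarrow> (\<forall>S \<subseteq> V. real (card S) \<le> 10 * d \<longrightarrow>
                real (card (nbhd E S)) \<ge> 10 * \<Delta> * real (card S))))"
  proof (rule exI, rule conjI[OF p0], intro allI impI, rule exI, rule conjI[OF \<mu>0],
      intro allI impI exI[of _ "0::real"])
    fix p \<mu> d :: real and V :: "'a set" and E S
    assume "0 < p \<and> p \<le> \<epsilon> / (20 * (1 + 10 * \<Delta>)\<^sup>2)" "0 < \<mu> \<and> \<mu> \<le> \<epsilon> / (2 * (1 + 10 * \<Delta>))"
      "0 \<le> d" "graph V E \<and> (\<forall>v\<in>V. \<epsilon> * d \<le> real (degree E v)) \<and>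
        \<not> (\<exists>U F. subgraph U F V E \<and> \<mu> * d \<le> real (card U) \<and> cut_dense p U F)"
      "S \<subseteq> V" "real (card S) \<le> 10 * d"
    then show "10 * \<Delta> * real (card S) \<le> real (card (nbhd E S))"
      using \<open>\<Delta> > 0\<close> \<open>\<epsilon> > 0\<close>
      by (intro card_nbhd_ge_if_no_cut_dense_subgraph[where \<epsilon> = \<epsilon> and d = d and p = p and \<mu> = \<mu>])
        auto
  qed
qed

end
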